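(* For any simple undirected graph $G$, $$n_G(\mathcal{L}_5)=\frac12\sum_{st\in E}\big(g_1(s,t)+g_1(t,s)\big),\qquad g_1(s,t)=\sum_{u\in\Gamma(s)\setminus\{t\}}\Big((k_t-1-a_{ut})(k_u-1-a_{ut})+1-|c(t,u)|\Big).$$
   Context: $a_{ij}$ adjacency entries, $k_x$ degree, $\Gamma(x)$ neighbourhood, $c(t,u)=\Gamma(t)\cap\Gamma(u)$. $\mathcal{L}_5$ is the path on 5 vertices; $n_G(F)$ counts (not necessarily induced) subgraphs isomorphic to $F$. *)

theory Defs
  imports Complex_Main
begin

definition simple_graph :: "'a set \<Rightarrow> ('a \<Rightarrow> 'a \<Rightarrow> bool) \<Rightarrow> bool" where
  "simple_graph V adj \<longleftrightarrow> finite V \<and> (\<forall>x y. adj x y \<longrightarrow> adj y x)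
     \<and> (\<forall>x. \<not> adj x x) \<and> (\<forall>x y. adj x y \<longrightarrow> x \<in> V \<and> y \<in> V)"

definition nbhd :: "'a set \<Rightarrow> ('a \<Rightarrow> 'a \<Rightarrow> bool) \<Rightarrow> 'a \<Rightarrow> 'a set" where
  "nbhd V adj x = {y \<in> V. adj x y}"

definition deg :: "'a set \<Rightarrow> ('a \<Rightarrow> 'a \<Rightarrow> bool) \<Rightarrow> 'a \<Rightarrow> nat" where
  "deg V adj x = card (nbhd V adj x)"

definition aij :: "('a \<Rightarrow> 'a \<Rightarrow> bool) \<Rightarrow> 'a \<Rightarrow> 'a \<Rightarrow> int" where
  "aij adj x y = (if adj x y then 1 else 0)"

definition common_nbhd :: "'a set \<Rightarrow> ('a \<Rightarrow> 'a \<Rightarrow> bool) \<Rightarrow> 'a \<Rightarrow> 'a \<Rightarrow> 'a set" where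
  "common_nbhd V adj t u = nbhd V adj t \<inter> nbhd V adj u"

definition g1 :: "'a set \<Rightarrow> ('a \<Rightarrow> 'a \<Rightarrow> bool) \<Rightarrow> 'a \<Rightarrow> 'a \<Rightarrow> int" where
  "g1 V adj s t = (\<Sum>u \<in> nbhd V adj s - {t}.
      (int (deg V adj t) - 1 - aij adj u t) * (int (deg V adj u) - 1 - aij adj u t)
      + 1 - int (card (common_nbhd V adj t u)))"

text \<open>Subgraphs of G isomorphic to the path L_5 (not necessarily induced). Such a
subgraph has no isolated vertices, so it is determined by its edge set; we collect
the edge sets of all paths on 5 distinct vertices.\<close>
definition L5_subgraphs :: "'a set \<Rightarrow> ('a \<Rightarrow> 'a \<Rightarrow> bool) \<Rightarrow> 'a set set set" where
  "L5_subgraphs V adj = {{{v0, v1}, {v1, v2}, {v2, v3}, {v3, v4}} | v0 v1 v2 v3 v4.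
      distinct [v0, v1, v2, v3, v4] \<and> {v0, v1, v2, v3, v4} \<subseteq> V \<and>
      adj v0 v1 \<and> adj v1 v2 \<and> adj v2 v3 \<and> adj v3 v4}"

definition n_L5 :: "'a set \<Rightarrow> ('a \<Rightarrow> 'a \<Rightarrow> bool) \<Rightarrow> nat" where
  "n_L5 V adj = card (L5_subgraphs V adj)"

definition edges :: "'a set \<Rightarrow> ('a \<Rightarrow> 'a \<Rightarrow> bool) \<Rightarrow> 'a set set" where
  "edges V adj = {{s, t} | s t. s \<in> V \<and> t \<in> V \<and> adj s t}"

end

theory Submission
  imports Defs
begin

(* Count the copies of L5 through their vertex sequences [y, u, s, t, x]; every copy is
   traversed by exactly two of them. Fix the middle arc (s, t) and the neighbour u of s:
   the admissible ends (y, x) form (N(u) - {s, t}) x (N(t) - {s, u}) minus its diagonal.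
   The two factors have k_u - 1 - a_ut and k_t - 1 - a_ut elements and the diagonal is
   c(t, u) - {s}, so there are g1(s, t) sequences with middle arc (s, t). Summing over
   both orientations of every edge therefore counts each copy twice. *)

lemma card_eq_mult_card_image:
  assumes "finite A" "\<And>x. x \<in> A \<Longrightarrow> card {y \<in> A. f y = f x} = k"
  shows "card A = k * card (f ` A)"
proof -
  have "(\<Sum>x\<in>A. card {b \<in> f ` A. f x = b}) = k * card (f ` A)"
    by (rule sum_multicount) (use assms in auto)
  moreover have "{b \<in> f ` A. f x = b} = {f x}" if "x \<in> A" for x
    using that by auto
  ultimately show ?thesis by simp
qed

lemma card_pairs_distinct:
  assumes "finite A" "finite B"
  shows "int (card {(y, x). y \<in> B \<and> x \<in> A \<and> y \<noteq> x}) =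
    int (card B) * int (card A) - int (card (A \<inter> B))"
proof -
  let ?diag = "(\<lambda>z. (z, z)) ` (A \<inter> B)"
  have pairs_eq: "{(y, x). y \<in> B \<and> x \<in> A \<and> y \<noteq> x} = B \<times> A - ?diag" by auto
  have diag_sub: "?diag \<subseteq> B \<times> A" by auto
  have card_diag: "card ?diag = card (A \<inter> B)"
    by (rule card_image) (auto simp: inj_on_def)
  have "card (B \<times> A - ?diag) = card (B \<times> A) - card (A \<inter> B)"
    using card_Diff_subset[OF finite_subset[OF diag_sub] diag_sub] assms card_diag by simp
  moreover have "card (A \<inter> B) \<le> card (B \<times> A)"
    using card_mono[OF _ diag_sub] assms card_diag by simp
  ultimately show ?thesis
    unfolding pairs_eq using assms by (simp add: card_cartesian_product of_nat_diff)
qed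

lemma int_card_Diff_singleton:
  assumes "finite A"
  shows "int (card (A - {x})) = int (card A) - (if x \<in> A then 1 else 0)"
proof (cases "x \<in> A")
  case True
  then have "card A \<ge> 1"
    using assms by (auto simp: Suc_le_eq card_gt_0_iff)
  with True show ?thesis
    by (simp add: card_Diff_singleton of_nat_diff)
qed simp

definition path_edges :: "'a list \<Rightarrow> 'a set set" where
  "path_edges xs = (\<lambda>(a, b). {a, b}) ` set (zip xs (tl xs))"

lemma path_edges_5:
  "path_edges [v0, v1, v2, v3, v4] = {{v0, v1}, {v1, v2}, {v2, v3}, {v3, v4}}"
  by (simp add: path_edges_def)

lemma path_edges_5_eq_imp:
  assumes "distinct [v0, v1, v2, v3, v4]" "distinct [w0, w1, w2, w3, w4]"
    and "path_edges [w0, w1, w2, w3, w4] = path_edges [v0, v1, v2, v3, v4]"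
  shows "[w0, w1, w2, w3, w4] = [v0, v1, v2, v3, v4] \<or> [w0, w1, w2, w3, w4] = [v4, v3, v2, v1, v0]"
proof -
  have edge_iff: "{a, b} \<in> {{v0, v1}, {v1, v2}, {v2, v3}, {v3, v4}} \<longleftrightarrow>
      (a = v0 \<and> b = v1 \<or> a = v1 \<and> b = v0 \<or> a = v1 \<and> b = v2 \<or> a = v2 \<and> b = v1 \<or>
       a = v2 \<and> b = v3 \<or> a = v3 \<and> b = v2 \<or> a = v3 \<and> b = v4 \<or> a = v4 \<and> b = v3)" for a b
    by (auto simp: doubleton_eq_iff)
  have "{{w0, w1}, {w1, w2}, {w2, w3}, {w3, w4}} \<subseteq> {{v0, v1}, {v1, v2}, {v2, v3}, {v3, v4}}"
    using assms(3) by (simp add: path_edges_5)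
  then have "{w0, w1} \<in> {{v0, v1}, {v1, v2}, {v2, v3}, {v3, v4}}"
    and "{w1, w2} \<in> {{v0, v1}, {v1, v2}, {v2, v3}, {v3, v4}}"
    and "{w2, w3} \<in> {{v0, v1}, {v1, v2}, {v2, v3}, {v3, v4}}"
    and "{w3, w4} \<in> {{v0, v1}, {v1, v2}, {v2, v3}, {v3, v4}}"
    by blast+
  then show ?thesis
    using assms(1,2) unfolding edge_iff
    by (smt (verit) distinct_length_2_or_more distinct_singleton list.inject)
qed

definition arcs :: "('a \<Rightarrow> 'a \<Rightarrow> bool) \<Rightarrow> ('a \<times> 'a) set" where
  "arcs adj = {(s, t). adj s t}"

definition L5_sequences :: "('a \<Rightarrow> 'a \<Rightarrow> bool) \<Rightarrow> 'a list set" where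
  "L5_sequences adj = {[v0, v1, v2, v3, v4] | v0 v1 v2 v3 v4.
      distinct [v0, v1, v2, v3, v4] \<and> adj v0 v1 \<and> adj v1 v2 \<and> adj v2 v3 \<and> adj v3 v4}"

definition L5_ends :: "'a set \<Rightarrow> ('a \<Rightarrow> 'a \<Rightarrow> bool) \<Rightarrow> 'a \<Rightarrow> 'a \<Rightarrow> 'a \<Rightarrow> ('a \<times> 'a) set" where
  "L5_ends V adj s t u =
    {(y, x). y \<in> nbhd V adj u - {s, t} \<and> x \<in> nbhd V adj t - {s, u} \<and> y \<noteq> x}"

lemma L5_sequencesI:
  "distinct [v0, v1, v2, v3, v4] \<Longrightarrow> adj v0 v1 \<Longrightarrow> adj v1 v2 \<Longrightarrow> adj v2 v3 \<Longrightarrow> adj v3 v4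
    \<Longrightarrow> [v0, v1, v2, v3, v4] \<in> L5_sequences adj"
  unfolding L5_sequences_def by blast

lemma L5_sequencesE:
  assumes "xs \<in> L5_sequences adj"
  obtains v0 v1 v2 v3 v4 where "xs = [v0, v1, v2, v3, v4]" "distinct [v0, v1, v2, v3, v4]"
    "adj v0 v1" "adj v1 v2" "adj v2 v3" "adj v3 v4"
  using assms unfolding L5_sequences_def by blast

context
  fixes V :: "'a set" and adj :: "'a \<Rightarrow> 'a \<Rightarrow> bool"
  assumes graph: "simple_graph V adj"
begin

lemma adj_sym: "adj x y \<Longrightarrow> adj y x"
  using graph by (simp add: simple_graph_def)

lemma adj_irrefl: "\<not> adj x x"
  using graph by (simp add: simple_graph_def)

lemma adj_imp_in_V: "adj x y \<Longrightarrow> x \<in> V \<and> y \<in> V"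
  using graph by (simp add: simple_graph_def)

lemma mem_nbhd_iff: "y \<in> nbhd V adj x \<longleftrightarrow> adj x y"
  using graph by (auto simp: simple_graph_def nbhd_def)

lemma finite_nbhd: "finite (nbhd V adj x)"
  using graph by (simp add: simple_graph_def nbhd_def)

lemma finite_arcs: "finite (arcs adj)"
proof (rule finite_subset)
  show "arcs adj \<subseteq> V \<times> V"
    using graph by (auto simp: simple_graph_def arcs_def)
  show "finite (V \<times> V)"
    using graph by (simp add: simple_graph_def)
qed

lemma card_nbhd_Diff2:
  assumes "adj v w" "w \<noteq> z"
  shows "int (card (nbhd V adj v - {w, z})) = int (deg V adj v) - 1 - aij adj v z"
proof -
  have "nbhd V adj v - {w, z} = nbhd V adj v - {w} - {z}" by auto
  moreover have "w \<in> nbhd V adj v" "z \<in> nbhd V adj v - {w} \<longleftrightarrow> adj v z"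
    using assms by (auto simp: mem_nbhd_iff)
  ultimately show ?thesis
    by (simp add: int_card_Diff_singleton finite_nbhd deg_def aij_def del: card_Diff_insert)
qed

lemma card_L5_ends:
  assumes "adj s t" "u \<in> nbhd V adj s - {t}"
  shows "int (card (L5_ends V adj s t u)) =
    (int (deg V adj t) - 1 - aij adj u t) * (int (deg V adj u) - 1 - aij adj u t)
      + 1 - int (card (common_nbhd V adj t u))"
proof -
  have us: "adj u s" "u \<noteq> s" "u \<noteq> t" "s \<noteq> t"
    using assms adj_sym adj_irrefl by (auto simp: mem_nbhd_iff)
  define A where "A = nbhd V adj t - {s, u}"
  define B where "B = nbhd V adj u - {s, t}"
  have aij_sym: "aij adj t u = aij adj u t"
    by (auto simp: aij_def dest: adj_sym)
  have card_A: "int (card A) = int (deg V adj t) - 1 - aij adj u t"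
    unfolding A_def using card_nbhd_Diff2 assms(1) us aij_sym adj_sym by metis
  have card_B: "int (card B) = int (deg V adj u) - 1 - aij adj u t"
    unfolding B_def using card_nbhd_Diff2 us by metis
  have "A \<inter> B = common_nbhd V adj t u - {s}"
    unfolding A_def B_def common_nbhd_def by (auto simp: mem_nbhd_iff adj_irrefl)
  moreover have "s \<in> common_nbhd V adj t u"
    unfolding common_nbhd_def using assms(1) us by (auto simp: mem_nbhd_iff intro: adj_sym)
  moreover have "finite (common_nbhd V adj t u)"
    unfolding common_nbhd_def by (simp add: finite_nbhd)
  ultimately have card_AB: "int (card (A \<inter> B)) = int (card (common_nbhd V adj t u)) - 1"
    by (simp add: int_card_Diff_singleton del: card_Diff_insert)
  have "L5_ends V adj s t u = {(y, x). y \<in> B \<and> x \<in> A \<and> y \<noteq> x}"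
    unfolding L5_ends_def A_def B_def by auto
  moreover have "int (card {(y, x). y \<in> B \<and> x \<in> A \<and> y \<noteq> x}) =
      int (card B) * int (card A) - int (card (A \<inter> B))"
    by (rule card_pairs_distinct) (simp_all add: A_def B_def finite_nbhd)
  ultimately show ?thesis
    using card_A card_B card_AB by (simp add: algebra_simps)
qed

lemma bij_betw_L5_sequences:
  "bij_betw (\<lambda>((s, t), (u, (y, x))). [y, u, s, t, x])
    (SIGMA (s, t) : arcs adj. SIGMA u : nbhd V adj s - {t}. L5_ends V adj s t u)
    (L5_sequences adj)"
  (is "bij_betw ?f ?W _")
proof (rule bij_betw_imageI)
  show "inj_on ?f ?W"
    by (auto simp: inj_on_def)
  show "?f ` ?W = L5_sequences adj"
  proof (intro equalityI subsetI)
    fix xs assume "xs \<in> ?f ` ?W"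
    then obtain p where "p \<in> ?W" and "xs = ?f p"
      by blast
    moreover obtain s t u y x where "p = ((s, t), (u, (y, x)))"
      by (metis surj_pair)
    ultimately have xs: "xs = [y, u, s, t, x]"
      and "adj s t" "u \<in> nbhd V adj s - {t}" "(y, x) \<in> L5_ends V adj s t u"
      by (auto simp: arcs_def)
    with xs show "xs \<in> L5_sequences adj"
      using adj_irrefl by (auto simp: L5_ends_def mem_nbhd_iff intro!: L5_sequencesI intro: adj_sym)
  next
    fix xs assume "xs \<in> L5_sequences adj"
    then obtain v0 v1 v2 v3 v4 where xs: "xs = [v0, v1, v2, v3, v4]"
      and "distinct [v0, v1, v2, v3, v4]" "adj v0 v1" "adj v1 v2" "adj v2 v3" "adj v3 v4"
      by (rule L5_sequencesE)
    then have "((v2, v3), (v1, (v0, v4))) \<in> ?W"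
      by (auto simp: arcs_def L5_ends_def mem_nbhd_iff intro: adj_sym)
    then show "xs \<in> ?f ` ?W"
      unfolding xs by (rule rev_image_eqI) simp
  qed
qed

lemma finite_L5_ends: "finite (L5_ends V adj s t u)"
  by (rule finite_subset[of _ "nbhd V adj u \<times> nbhd V adj t"])
    (auto simp: L5_ends_def finite_nbhd)

lemma finite_L5_sequences: "finite (L5_sequences adj)"
  using bij_betw_finite[OF bij_betw_L5_sequences]
  by (auto simp: finite_arcs finite_nbhd finite_L5_ends)

lemma card_L5_sequences: "int (card (L5_sequences adj)) = (\<Sum>(s, t)\<in>arcs adj. g1 V adj s t)"
proof -
  have "card (L5_sequences adj) =
      card (SIGMA (s, t) : arcs adj. SIGMA u : nbhd V adj s - {t}. L5_ends V adj s t u)"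
    using bij_betw_same_card[OF bij_betw_L5_sequences] by simp
  also have "\<dots> = (\<Sum>(s, t)\<in>arcs adj. \<Sum>u\<in>nbhd V adj s - {t}. card (L5_ends V adj s t u))"
    by (subst card_SigmaI) (auto simp: finite_arcs finite_nbhd finite_L5_ends card_SigmaI case_prod_beta)
  finally have "int (card (L5_sequences adj)) =
      (\<Sum>(s, t)\<in>arcs adj. \<Sum>u\<in>nbhd V adj s - {t}. int (card (L5_ends V adj s t u)))"
    by (simp add: case_prod_beta)
  also have "\<dots> = (\<Sum>(s, t)\<in>arcs adj. g1 V adj s t)"
    unfolding g1_def by (rule sum.cong) (auto simp: arcs_def card_L5_ends intro: sum.cong)
  finally show ?thesis .
qed

lemma L5_subgraphs_eq_image: "L5_subgraphs V adj = path_edges ` L5_sequences adj"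
proof (intro equalityI subsetI)
  fix E assume "E \<in> L5_subgraphs V adj"
  then obtain v0 v1 v2 v3 v4 where "E = path_edges [v0, v1, v2, v3, v4]"
    and "distinct [v0, v1, v2, v3, v4]" "adj v0 v1" "adj v1 v2" "adj v2 v3" "adj v3 v4"
    unfolding L5_subgraphs_def path_edges_5 by blast
  then show "E \<in> path_edges ` L5_sequences adj"
    by (blast intro: L5_sequencesI)
next
  fix E assume "E \<in> path_edges ` L5_sequences adj"
  then obtain v0 v1 v2 v3 v4 where "E = path_edges [v0, v1, v2, v3, v4]"
    and "distinct [v0, v1, v2, v3, v4]" "adj v0 v1" "adj v1 v2" "adj v2 v3" "adj v3 v4"
    by (auto elim: L5_sequencesE)
  moreover have "{v0, v1, v2, v3, v4} \<subseteq> V"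
    using calculation by (auto dest: adj_imp_in_V)
  ultimately show "E \<in> L5_subgraphs V adj"
    unfolding L5_subgraphs_def path_edges_5 by blast
qed

lemma card_L5_sequences_eq_double: "card (L5_sequences adj) = 2 * n_L5 V adj"
proof -
  have "card {ys \<in> L5_sequences adj. path_edges ys = path_edges xs} = 2"
    if xs_in: "xs \<in> L5_sequences adj" for xs
  proof -
    obtain v0 v1 v2 v3 v4 where xs: "xs = [v0, v1, v2, v3, v4]"
      and dist: "distinct [v0, v1, v2, v3, v4]"
      and "adj v0 v1" "adj v1 v2" "adj v2 v3" "adj v3 v4"
      using xs_in by (rule L5_sequencesE)
    then have "[v4, v3, v2, v1, v0] \<in> L5_sequences adj"
      by (auto intro!: L5_sequencesI intro: adj_sym)
    moreover have "path_edges [v4, v3, v2, v1, v0] = path_edges xs"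
      unfolding xs path_edges_5 by (simp add: insert_commute)
    moreover have "ys \<in> {xs, [v4, v3, v2, v1, v0]}"
      if "ys \<in> L5_sequences adj" "path_edges ys = path_edges xs" for ys
      using that(1)
    proof (rule L5_sequencesE)
      fix w0 w1 w2 w3 w4
      assume "ys = [w0, w1, w2, w3, w4]" "distinct [w0, w1, w2, w3, w4]"
      then show ?thesis
        using path_edges_5_eq_imp[OF dist] that(2) xs by auto
    qed
    ultimately have "{ys \<in> L5_sequences adj. path_edges ys = path_edges xs} =
        {xs, [v4, v3, v2, v1, v0]}"
      using xs_in by blast
    then show ?thesis
      using dist xs by auto
  qed
  then show ?thesis
    unfolding n_L5_def L5_subgraphs_eq_image
    using card_eq_mult_card_image finite_L5_sequences by blast
qed

lemma sum_arcs_swap: "(\<Sum>(s, t)\<in>arcs adj. f t s) = (\<Sum>(s, t)\<in>arcs adj. f s t)"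
proof -
  have "prod.swap ` arcs adj = arcs adj"
    by (auto simp: arcs_def image_iff intro: adj_sym)
  then have "(\<Sum>(s, t)\<in>arcs adj. f s t) = (\<Sum>p\<in>prod.swap ` arcs adj. case p of (s, t) \<Rightarrow> f s t)"
    by simp
  also have "\<dots> = (\<Sum>(s, t)\<in>arcs adj. f t s)"
    by (subst sum.reindex) (auto simp: case_prod_beta)
  finally show ?thesis by simp
qed

lemma sum_arcs_eq_double_sum_edges:
  fixes f :: "'a \<Rightarrow> 'a \<Rightarrow> 'b :: comm_semiring_1"
  assumes f_sym: "\<And>s t. f s t = f t s"
  shows "(\<Sum>(s, t)\<in>arcs adj. f s t) =
    2 * (\<Sum>e\<in>edges V adj. SOME r. \<exists>s t. e = {s, t} \<and> adj s t \<and> r = f s t)"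
proof -
  let ?ends = "\<lambda>(s, t). {s, t}"
  let ?choice = "\<lambda>e. SOME r. \<exists>s t. e = {s, t} \<and> adj s t \<and> r = f s t"
  have edges_eq: "edges V adj = ?ends ` arcs adj"
    by (auto simp: edges_def arcs_def dest: adj_imp_in_V)
  have fibre_sum: "(\<Sum>p\<in>{p \<in> arcs adj. ?ends p = e}. case_prod f p) = 2 * ?choice e"
    if e_in: "e \<in> edges V adj" for e
  proof -
    obtain s t where e: "e = {s, t}" and st: "adj s t"
      using e_in by (auto simp: edges_eq arcs_def)
    have "s \<noteq> t"
      using st adj_irrefl by blast
    have "{p \<in> arcs adj. ?ends p = e} = {(s, t), (t, s)}"
      using st adj_sym[OF st] by (auto simp: e arcs_def doubleton_eq_iff split: prod.splits)
    then have "(\<Sum>p\<in>{p \<in> arcs adj. ?ends p = e}. case_prod f p) = f s t + f t s"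
      using \<open>s \<noteq> t\<close> by simp
    moreover have "?choice e = f s t"
      by (rule some_equality) (use st f_sym in \<open>auto simp: e doubleton_eq_iff\<close>)
    ultimately show ?thesis
      by (metis f_sym mult_2)
  qed
  have "(\<Sum>(s, t)\<in>arcs adj. f s t) =
      (\<Sum>e\<in>edges V adj. \<Sum>p\<in>{p \<in> arcs adj. ?ends p = e}. case_prod f p)"
    by (rule sum.group[symmetric]) (auto simp: edges_eq finite_arcs)
  also have "\<dots> = (\<Sum>e\<in>edges V adj. 2 * ?choice e)"
    using fibre_sum by (rule sum.cong[OF refl])
  finally show ?thesis
    by (simp add: sum_distrib_left)
qed

end

theorem proposition13:
  fixes V :: "'a set" and adj :: "'a \<Rightarrow> 'a \<Rightarrow> bool"
  assumes "simple_graph V adj"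
  shows "real (n_L5 V adj) =
    1/2 * (\<Sum>e \<in> edges V adj. (SOME r. \<exists>s t. e = {s, t} \<and> adj s t \<and>
              r = real_of_int (g1 V adj s t + g1 V adj t s)))"
proof -
  let ?g = "\<lambda>s t. real_of_int (g1 V adj s t)"
  have "2 * real (n_L5 V adj) = (\<Sum>(s, t)\<in>arcs adj. ?g s t)"
    using arg_cong[OF card_L5_sequences[OF assms], of real_of_int]
      card_L5_sequences_eq_double[OF assms] by (simp add: case_prod_beta)
  also have "\<dots> = 1/2 * (\<Sum>(s, t)\<in>arcs adj. ?g s t + ?g t s)"
    using sum_arcs_swap[OF assms, of ?g] by (simp add: sum.distrib case_prod_beta)
  also have "\<dots> = (\<Sum>e\<in>edges V adj. SOME r. \<exists>s t. e = {s, t} \<and> adj s t \<and>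
      r = real_of_int (g1 V adj s t + g1 V adj t s))"
    using sum_arcs_eq_double_sum_edges[OF assms, of "\<lambda>s t. ?g s t + ?g t s"] by simp
  finally show ?thesis by simp
qed

end
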